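(* Fix $z\in\{0,1\}$ and let $(\hat w^{*+}_{z,ij})_{ij:Z_{ij}=z}$ be the solution of the program (P): minimize $\sum_{ij:Z_{ij}=z}\psi(w_{ij})$ subject to $\bigl|\sum_{ij:Z_{ij}=z}w_{ij}B_k(X_{ij})-B^*_k\bigr|\le\delta_k$ for $k=1,\dots,K$ and $w_{ij}\ge0$ for all $ij$ with $Z_{ij}=z$. Let $R=\{ij: Z_{ij}=z,\ \hat w^{*+}_{z,ij}\neq0\}$ be the set of units receiving non-zero weight. Consider the relaxed program (P$_R$) over the units in $R$ only and without the non-negativity constraint: minimize $\sum_{ij\in R}\psi(w_{ij})$ subject to $\bigl|\sum_{ij\in R}w_{ij}B_k(X_{ij})-B^*_k\bigr|\le\delta_k$ for $k=1,\dots,K$. Then solving (P) is equivalent to the two-step procedure (I) restrict to $R$, discarding all other units; (II) solve (P$_R$): the solution of (P$_R$), extended by zero outside $R$, coincides with the solution $\hat w^{*+}_{z}$ of (P).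
   Context: There are $m$ studies with $n=\sum_i n_i$ individuals in total; individual $ij$ has binary treatment $Z_{ij}$ and covariates $X_{ij}\in\mathbb{R}^p$; all sums over $ij$ are over these study individuals. $B=(B_1,\dots,B_K)^\top$ are basis functions of the covariates with $B_1\equiv1$; $B^*=(B^*_1,\dots,B^*_K)^\top\in\mathbb{R}^K$ is a target covariate profile with $B^*_1=1$; $\delta=(\delta_1,\dots,\delta_K)$ are tolerances with $\delta_k\ge0$ and $\delta_1=0$ (so the first constraint enforces $\sum w_{ij}=1$). $\psi:\mathbb{R}\to\mathbb{R}$ is a convex dispersion function (differentiable, with $\psi'$ invertible). *)

theory Defs
  imports "HOL-Analysis.Analysis"
begin

definition balance_ok ::
  "'u set \<Rightarrow> nat \<Rightarrow> (nat \<Rightarrow> 'x \<Rightarrow> real) \<Rightarrow> ('u \<Rightarrow> 'x) \<Rightarrow> (nat \<Rightarrow> real)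
     \<Rightarrow> (nat \<Rightarrow> real) \<Rightarrow> ('u \<Rightarrow> real) \<Rightarrow> bool" where
  "balance_ok A K B X Bstar \<delta> w \<longleftrightarrow>
     (\<forall>k\<in>{1..K}. \<bar>(\<Sum>u\<in>A. w u * B k (X u)) - Bstar k\<bar> \<le> \<delta> k)"

definition is_minimizer :: "(('u \<Rightarrow> real) \<Rightarrow> bool) \<Rightarrow> (('u \<Rightarrow> real) \<Rightarrow> real) \<Rightarrow> ('u \<Rightarrow> real) \<Rightarrow> bool" where
  "is_minimizer F obj w \<longleftrightarrow> F w \<and> (\<forall>v. F v \<longrightarrow> obj w \<le> obj v)"

end

theory Submission
  imports Defs
begin

text \<open>On R the solution of (P) is strictly positive, so its sign constraints are inactive
  there: for any v feasible for (P_R), a small step from the solution towards v is still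
  feasible for (P), because the balance constraints are convex and both points vanish
  outside R. Convexity of the objective then shows that the solution of (P) already solves
  (P_R). Injectivity of the derivative makes \<open>\<psi>\<close> strictly convex, so any two solutions of
  (P_R) agree on R: otherwise their midpoint would be feasible and strictly better.\<close>

lemma convex_inj_deriv_midpoint_less:
  fixes \<psi> :: "real \<Rightarrow> real"
  assumes convex: "convex_on UNIV \<psi>" and diff: "\<forall>x. \<psi> differentiable (at x)"
    and inj: "inj (deriv \<psi>)" and "a \<noteq> b"
  shows "\<psi> ((a + b) / 2) < (\<psi> a + \<psi> b) / 2"
proof -
  have D: "\<And>x. DERIV \<psi> x :> deriv \<psi> x"
    using diff DERIV_deriv_iff_real_differentiable by blast
  have "\<psi> ((a + b) / 2) < (\<psi> a + \<psi> b) / 2" if "a < b" for a b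
  proof -
    define c where "c = (a + b) / 2"
    have "a < c" "c < b" using \<open>a < b\<close> by (auto simp: c_def)
    obtain x1 where x1: "a < x1" "x1 < c" "\<psi> c - \<psi> a = (c - a) * deriv \<psi> x1"
      using MVT2[OF \<open>a < c\<close> D] by blast
    obtain x2 where x2: "c < x2" "x2 < b" "\<psi> b - \<psi> c = (b - c) * deriv \<psi> x2"
      using MVT2[OF \<open>c < b\<close> D] by blast
    have "\<psi> c \<le> (1 - 1/2) * \<psi> a + 1/2 * \<psi> b"
      using convex_onD[OF convex, of "1/2" a b] by (simp add: c_def add_divide_distrib)
    then have le: "\<psi> c \<le> (\<psi> a + \<psi> b) / 2" by simp
    have "b - c = c - a" by (simp add: c_def field_simps)
    have "\<psi> c \<noteq> (\<psi> a + \<psi> b) / 2"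
    proof
      assume "\<psi> c = (\<psi> a + \<psi> b) / 2"
      then have "\<psi> c - \<psi> a = \<psi> b - \<psi> c" by simp
      then have "(c - a) * deriv \<psi> x1 = (b - c) * deriv \<psi> x2"
        using x1(3) x2(3) by linarith
      then have "(c - a) * deriv \<psi> x1 = (c - a) * deriv \<psi> x2"
        using \<open>b - c = c - a\<close> by (simp only:)
      moreover have "c - a \<noteq> 0" using \<open>a < c\<close> by simp
      ultimately have "deriv \<psi> x1 = deriv \<psi> x2" by (rule mult_left_cancel[THEN iffD1, rotated])
      then have "x1 = x2" using inj by (rule injD[rotated])
      with x1(2) x2(1) show False by simp
    qed
    with le show ?thesis by (simp add: c_def)
  qed
  from this[of a b] this[of b a] \<open>a \<noteq> b\<close> show ?thesis
    by (cases "a < b") (simp_all add: add.commute)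
qed

lemma sum_midpoint_less:
  fixes \<psi> :: "real \<Rightarrow> real"
  assumes "finite A"
    and strict: "\<And>a b. a \<noteq> b \<Longrightarrow> \<psi> ((a + b) / 2) < (\<psi> a + \<psi> b) / 2"
    and "x \<in> A" "v x \<noteq> w x"
  shows "(\<Sum>u\<in>A. \<psi> ((v u + w u) / 2)) < ((\<Sum>u\<in>A. \<psi> (v u)) + (\<Sum>u\<in>A. \<psi> (w u))) / 2"
proof -
  have "(\<Sum>u\<in>A. \<psi> ((v u + w u) / 2)) < (\<Sum>u\<in>A. (\<psi> (v u) + \<psi> (w u)) / 2)"
  proof (rule sum_strict_mono_ex1[OF \<open>finite A\<close>])
    show "\<forall>u\<in>A. \<psi> ((v u + w u) / 2) \<le> (\<psi> (v u) + \<psi> (w u)) / 2"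
      using strict by (metis add_divide_distrib field_sum_of_halves order.refl order_less_imp_le)
    show "\<exists>u\<in>A. \<psi> ((v u + w u) / 2) < (\<psi> (v u) + \<psi> (w u)) / 2"
      using strict assms(3,4) by blast
  qed
  then show ?thesis by (simp only: sum_divide_distrib[symmetric] sum.distrib)
qed

lemma sum_convex_comb_le:
  fixes \<psi> :: "real \<Rightarrow> real"
  assumes "convex_on UNIV \<psi>" "0 \<le> t" "t \<le> 1"
  shows "(\<Sum>u\<in>A. \<psi> (t * v u + (1 - t) * w u))
           \<le> t * (\<Sum>u\<in>A. \<psi> (v u)) + (1 - t) * (\<Sum>u\<in>A. \<psi> (w u))"
proof -
  have "(\<Sum>u\<in>A. \<psi> (t * v u + (1 - t) * w u)) \<le> (\<Sum>u\<in>A. t * \<psi> (v u) + (1 - t) * \<psi> (w u))"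
    using convex_onD[OF assms(1)] assms(2,3) by (intro sum_mono) (simp add: algebra_simps)
  then show ?thesis by (simp add: sum.distrib sum_distrib_left)
qed

lemma balance_ok_convex_comb:
  assumes "balance_ok A K B X Bs \<delta> v" "balance_ok A K B X Bs \<delta> w" "0 \<le> t" "t \<le> 1"
  shows "balance_ok A K B X Bs \<delta> (\<lambda>u. t * v u + (1 - t) * w u)"
  unfolding balance_ok_def
proof
  fix k assume k: "k \<in> {1..K}"
  define a where "a = (\<Sum>u\<in>A. v u * B k (X u)) - Bs k"
  define b where "b = (\<Sum>u\<in>A. w u * B k (X u)) - Bs k"
  have "\<bar>a\<bar> \<le> \<delta> k" "\<bar>b\<bar> \<le> \<delta> k"
    using assms(1,2) k by (auto simp: balance_ok_def a_def b_def)
  have "(\<Sum>u\<in>A. (t * v u + (1 - t) * w u) * B k (X u))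
      = t * (\<Sum>u\<in>A. v u * B k (X u)) + (1 - t) * (\<Sum>u\<in>A. w u * B k (X u))"
    by (simp add: sum.distrib sum_distrib_left mult.assoc distrib_right)
  then have "(\<Sum>u\<in>A. (t * v u + (1 - t) * w u) * B k (X u)) - Bs k = t * a + (1 - t) * b"
    by (simp add: a_def b_def algebra_simps)
  also have "\<bar>t * a + (1 - t) * b\<bar> \<le> t * \<bar>a\<bar> + (1 - t) * \<bar>b\<bar>"
    using abs_triangle_ineq[of "t * a" "(1 - t) * b"] assms(3,4) by (simp add: abs_mult)
  also have "\<dots> \<le> \<delta> k"
    using \<open>\<bar>a\<bar> \<le> \<delta> k\<close> \<open>\<bar>b\<bar> \<le> \<delta> k\<close> assms(3,4) by (intro convex_bound_le) auto
  finally show "\<bar>(\<Sum>u\<in>A. (t * v u + (1 - t) * w u) * B k (X u)) - Bs k\<bar> \<le> \<delta> k" .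
qed

lemma balance_ok_zero_outside:
  assumes "finite S" "R \<subseteq> S" "\<forall>u\<in>S - R. w u = 0"
  shows "balance_ok S K B X Bs \<delta> w \<longleftrightarrow> balance_ok R K B X Bs \<delta> w"
proof -
  have "\<And>k. (\<Sum>u\<in>S. w u * B k (X u)) = (\<Sum>u\<in>R. w u * B k (X u))"
    using assms by (intro sum.mono_neutral_right) auto
  then show ?thesis by (simp add: balance_ok_def)
qed

lemma balance_ok_cong:
  assumes "\<forall>u\<in>A. v u = w u"
  shows "balance_ok A K B X Bs \<delta> v \<longleftrightarrow> balance_ok A K B X Bs \<delta> w"
  using assms unfolding balance_ok_def by (simp cong: sum.cong)

lemma exists_small_step_nonneg:
  fixes v w :: "'u \<Rightarrow> real"
  assumes "finite A" "\<forall>u\<in>A. 0 < w u"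
  obtains t where "0 < t" "t \<le> 1" "\<forall>u\<in>A. 0 \<le> t * v u + (1 - t) * w u"
proof -
  have "\<forall>\<^sub>F t in at_right 0. \<forall>u\<in>A. 0 < t * v u + (1 - t) * w u"
  proof (rule eventually_ball_finite[OF \<open>finite A\<close>], rule ballI)
    fix u assume "u \<in> A"
    have "((\<lambda>t. t * v u + (1 - t) * w u) \<longlongrightarrow> 0 * v u + (1 - 0) * w u) (at_right 0)"
      by (intro tendsto_intros)
    then show "\<forall>\<^sub>F t in at_right 0. 0 < t * v u + (1 - t) * w u"
      using assms(2) \<open>u \<in> A\<close> by (auto dest: order_tendstoD(1))
  qed
  moreover have "\<forall>\<^sub>F t in at_right (0::real). 0 < t \<and> t \<le> 1"
    by (auto simp: eventually_at_right_field intro!: exI[of _ 1])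
  ultimately obtain t where "0 < t" "t \<le> 1" "\<forall>u\<in>A. 0 < t * v u + (1 - t) * w u"
    using eventually_happens'[OF trivial_limit_at_right_real] eventually_conj by blast
  then show thesis using that by (meson less_imp_le)
qed

lemma is_minimizer_balance_on_support:
  fixes \<psi> :: "real \<Rightarrow> real" and w :: "'u \<Rightarrow> real"
  assumes "finite S" "R \<subseteq> S" and convex: "convex_on UNIV \<psi>"
    and pos: "\<forall>u\<in>R. 0 < w u" and zero: "\<forall>u\<in>S - R. w u = 0"
    and min: "is_minimizer (\<lambda>v. balance_ok S K B X Bs \<delta> v \<and> (\<forall>u\<in>S. 0 \<le> v u))
                (\<lambda>v. \<Sum>u\<in>S. \<psi> (v u)) w"
  shows "is_minimizer (balance_ok R K B X Bs \<delta>) (\<lambda>v. \<Sum>u\<in>R. \<psi> (v u)) w"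
proof -
  have "finite R" using \<open>finite S\<close> \<open>R \<subseteq> S\<close> finite_subset by blast
  have "balance_ok S K B X Bs \<delta> w" using min by (simp add: is_minimizer_def)
  then have feasible_R: "balance_ok R K B X Bs \<delta> w"
    using balance_ok_zero_outside[OF \<open>finite S\<close> \<open>R \<subseteq> S\<close> zero] by blast
  have split: "(\<Sum>u\<in>S. \<psi> (f u)) = (\<Sum>u\<in>R. \<psi> (f u)) + (\<Sum>u\<in>S - R. \<psi> (f u))" for f
    using sum.subset_diff[OF \<open>R \<subseteq> S\<close> \<open>finite S\<close>] by (simp add: add.commute)
  have "(\<Sum>u\<in>R. \<psi> (w u)) \<le> (\<Sum>u\<in>R. \<psi> (v u))" if "balance_ok R K B X Bs \<delta> v" for v
  proof -
    obtain t where t: "0 < t" "t \<le> 1" "\<forall>u\<in>R. 0 \<le> t * v u + (1 - t) * w u"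
      using exists_small_step_nonneg[OF \<open>finite R\<close> pos] by blast
    define c where "c u = (if u \<in> R then t * v u + (1 - t) * w u else w u)" for u
    have "balance_ok R K B X Bs \<delta> (\<lambda>u. t * v u + (1 - t) * w u)"
      using balance_ok_convex_comb[OF that feasible_R] t by simp
    then have "balance_ok R K B X Bs \<delta> c"
      using balance_ok_cong[of R c "\<lambda>u. t * v u + (1 - t) * w u" K B X Bs \<delta>]
      by (simp add: c_def)
    moreover have "\<forall>u\<in>S - R. c u = 0" using zero by (simp add: c_def)
    ultimately have "balance_ok S K B X Bs \<delta> c"
      using balance_ok_zero_outside[OF \<open>finite S\<close> \<open>R \<subseteq> S\<close>] by blast
    moreover have "\<forall>u\<in>S. 0 \<le> c u"
      using t(3) min by (auto simp: c_def is_minimizer_def)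
    ultimately have "(\<Sum>u\<in>S. \<psi> (w u)) \<le> (\<Sum>u\<in>S. \<psi> (c u))"
      using min by (simp add: is_minimizer_def)
    moreover have "(\<Sum>u\<in>S - R. \<psi> (c u)) = (\<Sum>u\<in>S - R. \<psi> (w u))"
      by (simp add: c_def)
    ultimately have "(\<Sum>u\<in>R. \<psi> (w u)) \<le> (\<Sum>u\<in>R. \<psi> (c u))"
      using split[of w] split[of c] by simp
    also have "\<dots> = (\<Sum>u\<in>R. \<psi> (t * v u + (1 - t) * w u))"
      by (simp add: c_def)
    also have "\<dots> \<le> t * (\<Sum>u\<in>R. \<psi> (v u)) + (1 - t) * (\<Sum>u\<in>R. \<psi> (w u))"
      using t by (intro sum_convex_comb_le[OF convex]) auto
    finally show ?thesis using \<open>0 < t\<close> by (simp add: algebra_simps)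
  qed
  with feasible_R show ?thesis by (simp add: is_minimizer_def)
qed

lemma is_minimizer_balance_unique:
  fixes \<psi> :: "real \<Rightarrow> real"
  assumes "finite A"
    and strict: "\<And>a b. a \<noteq> b \<Longrightarrow> \<psi> ((a + b) / 2) < (\<psi> a + \<psi> b) / 2"
    and v: "is_minimizer (balance_ok A K B X Bs \<delta>) (\<lambda>w. \<Sum>u\<in>A. \<psi> (w u)) v"
    and w: "is_minimizer (balance_ok A K B X Bs \<delta>) (\<lambda>w. \<Sum>u\<in>A. \<psi> (w u)) w"
  shows "\<forall>u\<in>A. v u = w u"
proof (rule ccontr)
  assume "\<not> (\<forall>u\<in>A. v u = w u)"
  then obtain x where "x \<in> A" "v x \<noteq> w x" by blast
  have "balance_ok A K B X Bs \<delta> (\<lambda>u. 1/2 * v u + (1 - 1/2) * w u)"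
    using v w by (intro balance_ok_convex_comb) (auto simp: is_minimizer_def)
  then have "balance_ok A K B X Bs \<delta> (\<lambda>u. (v u + w u) / 2)"
    by (simp add: add_divide_distrib)
  then have "(\<Sum>u\<in>A. \<psi> (v u)) \<le> (\<Sum>u\<in>A. \<psi> ((v u + w u) / 2))"
    and "(\<Sum>u\<in>A. \<psi> (w u)) \<le> (\<Sum>u\<in>A. \<psi> ((v u + w u) / 2))"
    using v w by (auto simp: is_minimizer_def)
  moreover have "(\<Sum>u\<in>A. \<psi> ((v u + w u) / 2)) < ((\<Sum>u\<in>A. \<psi> (v u)) + (\<Sum>u\<in>A. \<psi> (w u))) / 2"
    using sum_midpoint_less[of A \<psi> x v w] strict \<open>finite A\<close> \<open>x \<in> A\<close> \<open>v x \<noteq> w x\<close> by blast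
  ultimately show False by argo
qed

theorem theorem1:
  fixes m :: nat and n :: "nat \<Rightarrow> nat"
    and Z :: "nat \<times> nat \<Rightarrow> nat" and X :: "nat \<times> nat \<Rightarrow> real ^ 'p"
    and K :: nat and B :: "nat \<Rightarrow> real ^ 'p \<Rightarrow> real"
    and Bstar :: "nat \<Rightarrow> real" and \<delta> :: "nat \<Rightarrow> real"
    and \<psi> :: "real \<Rightarrow> real" and z :: nat
    and wplus :: "nat \<times> nat \<Rightarrow> real"
  defines "U \<equiv> SIGMA i:{1..m}. {1..n i}"
  defines "S \<equiv> {ij \<in> U. Z ij = z}"
  defines "R \<equiv> {ij \<in> S. wplus ij \<noteq> 0}"
  assumes Z_binary: "\<forall>ij\<in>U. Z ij \<in> {0, 1}"
    and K_pos: "K \<ge> 1"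
    and B1: "\<forall>x. B 1 x = 1"
    and Bstar1: "Bstar 1 = 1"
    and delta_nonneg: "\<forall>k\<in>{1..K}. \<delta> k \<ge> 0"
    and delta1: "\<delta> 1 = 0"
    and psi_convex: "convex_on UNIV \<psi>"
    and psi_diff: "\<forall>x. \<psi> differentiable (at x)"
    and psi_deriv_inv: "inj (deriv \<psi>)"
    and z01: "z \<in> {0, 1}"
    and wplus_sol: "is_minimizer
        (\<lambda>w. balance_ok S K B X Bstar \<delta> w \<and> (\<forall>ij\<in>S. w ij \<ge> 0))
        (\<lambda>w. \<Sum>ij\<in>S. \<psi> (w ij)) wplus"
  shows "is_minimizer (balance_ok R K B X Bstar \<delta>) (\<lambda>w. \<Sum>ij\<in>R. \<psi> (w ij)) wplus
         \<and> (\<forall>v. is_minimizer (balance_ok R K B X Bstar \<delta>) (\<lambda>w. \<Sum>ij\<in>R. \<psi> (w ij)) v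
               \<longrightarrow> (\<forall>ij\<in>S. (if ij \<in> R then v ij else 0) = wplus ij))"
proof -
  have "finite S" by (simp add: S_def U_def)
  have "R \<subseteq> S" by (auto simp: R_def)
  have pos: "\<forall>ij\<in>R. 0 < wplus ij" and zero: "\<forall>ij\<in>S - R. wplus ij = 0"
    using wplus_sol by (force simp: R_def is_minimizer_def)+
  have min_R: "is_minimizer (balance_ok R K B X Bstar \<delta>) (\<lambda>w. \<Sum>ij\<in>R. \<psi> (w ij)) wplus"
    using is_minimizer_balance_on_support[OF \<open>finite S\<close> \<open>R \<subseteq> S\<close> psi_convex pos zero wplus_sol] .
  have "\<forall>ij\<in>R. v ij = wplus ij"
    if "is_minimizer (balance_ok R K B X Bstar \<delta>) (\<lambda>w. \<Sum>ij\<in>R. \<psi> (w ij)) v" for v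
    using is_minimizer_balance_unique[OF _ _ that min_R] \<open>finite S\<close> \<open>R \<subseteq> S\<close> finite_subset
      convex_inj_deriv_midpoint_less[OF psi_convex psi_diff psi_deriv_inv] by blast
  with min_R zero show ?thesis by auto
qed

end
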